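(* Let $X$ be a nonempty set, $G\le S_X$, $\Lambda=(\lambda_x\in G:x\in X/G)$, and consider $(X,* )=\mathbf R(G,\Lambda)$. Then: (i) $(X,* )$ is well-defined if and only if $(G,\Lambda)$ is a rack folder, in which case $(X,* )$ is a rack satisfying $L_x=\lambda_x$ for every $x\in X/G$ and $\mathrm{LMlt}(X,* )=\langle\bigcup_{x\in X/G}\lambda_x^G\rangle\le G$; (ii) $(X,* )$ is a well-defined quandle if and only if $(G,\Lambda)$ is a quandle folder.
   Context: Permutations act on the right ($xf$ is the image of $x$ under $f$; $fg$ means $f$ first, then $g$); $g^f=f^{-1}gf$, $f^G=\{f^g:g\in G\}$. For $G\le S_X$, $xG$ is the orbit of $x$, $G_x$ its stabilizer, $X/G$ a fixed complete set of orbit representatives; $C_G(H)$ is the centralizer, $Z(H)$ the center. A left quasigroup is a groupoid $(X,* )$ whose left translations $L_x$ ($yL_x=x*y$) are bijections; a rack is a left quasigroup with $x*(y*z)=(x*y)*(x*z)$; a quandle is a rack with $x*x=x$; $\mathrm{LMlt}(X,* )=\langle L_x:x\in X\rangle$. A pair $(G,(\lambda_x:x\in X/G))$ is a rack folder (resp. quandle folder) if $\lambda_x\in C_G(G_x)$ (resp. $\lambda_x\in Z(G_x)$) for every $x\in X/G$. Given $G\le S_X$ and $\Lambda=(\lambda_x\in G:x\in X/G)$, $\mathbf R(G,\Lambda)=(X,* )$ is the attempted groupoid defined by setting $L_y=(\lambda_x)^{g_y}$ whenever $x\in X/G$, $y\in xG$ and $g_y$ is any element of $G$ with $xg_y=y$;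 it is well-defined if this does not depend on the choice of $g_y$. *)

theory Defs
  imports "HOL-Algebra.Bij" "HOL-Algebra.Generated_Groups"
begin

text \<open>Permutation groups on X are subgroups G of BijGroup X (extensional bijections
of X). In BijGroup X the product g (x) f is the composition g o f (f applied first),
so the paper's right-action product fg (f first, then g) is g (x) f, and the paper's
conjugate f^g = g^{-1} f g is g (x) f (x) inv g as a map of X.\<close>

definition pconj :: "'a set \<Rightarrow> ('a \<Rightarrow> 'a) \<Rightarrow> ('a \<Rightarrow> 'a) \<Rightarrow> ('a \<Rightarrow> 'a)" where
  "pconj X f g = monoid.mult (BijGroup X) (monoid.mult (BijGroup X) g f) (m_inv (BijGroup X) g)"

definition conj_class :: "'a set \<Rightarrow> ('a \<Rightarrow> 'a) \<Rightarrow> ('a \<Rightarrow> 'a) set \<Rightarrow> ('a \<Rightarrow> 'a) set" where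
  "conj_class X f G = {pconj X f g | g. g \<in> G}"

definition orbit :: "('a \<Rightarrow> 'a) set \<Rightarrow> 'a \<Rightarrow> 'a set" where
  "orbit G x = {g x | g. g \<in> G}"

definition stab :: "('a \<Rightarrow> 'a) set \<Rightarrow> 'a \<Rightarrow> ('a \<Rightarrow> 'a) set" where
  "stab G x = {g \<in> G. g x = x}"

definition centralizer :: "'a set \<Rightarrow> ('a \<Rightarrow> 'a) set \<Rightarrow> ('a \<Rightarrow> 'a) set \<Rightarrow> ('a \<Rightarrow> 'a) set" where
  "centralizer X G H = {g \<in> G. \<forall>h\<in>H. monoid.mult (BijGroup X) g h = monoid.mult (BijGroup X) h g}"

definition center :: "'a set \<Rightarrow> ('a \<Rightarrow> 'a) set \<Rightarrow> ('a \<Rightarrow> 'a) set" where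
  "center X H = centralizer X H H"

definition orbit_reps :: "'a set \<Rightarrow> ('a \<Rightarrow> 'a) set \<Rightarrow> 'a set \<Rightarrow> bool" where
  "orbit_reps X G T \<longleftrightarrow> T \<subseteq> X \<and> (\<forall>y\<in>X. \<exists>!x. x \<in> T \<and> y \<in> orbit G x)"

definition rack_folder :: "'a set \<Rightarrow> ('a \<Rightarrow> 'a) set \<Rightarrow> 'a set \<Rightarrow> ('a \<Rightarrow> ('a \<Rightarrow> 'a)) \<Rightarrow> bool" where
  "rack_folder X G T lam \<longleftrightarrow> (\<forall>x\<in>T. lam x \<in> centralizer X G (stab G x))"

definition quandle_folder :: "'a set \<Rightarrow> ('a \<Rightarrow> 'a) set \<Rightarrow> 'a set \<Rightarrow> ('a \<Rightarrow> ('a \<Rightarrow> 'a)) \<Rightarrow> bool" where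
  "quandle_folder X G T lam \<longleftrightarrow> (\<forall>x\<in>T. lam x \<in> center X (stab G x))"

definition ltrans :: "'a set \<Rightarrow> ('a \<Rightarrow> 'a \<Rightarrow> 'a) \<Rightarrow> 'a \<Rightarrow> ('a \<Rightarrow> 'a)" where
  "ltrans X op x = (\<lambda>y\<in>X. op x y)"

definition left_quasigroup :: "'a set \<Rightarrow> ('a \<Rightarrow> 'a \<Rightarrow> 'a) \<Rightarrow> bool" where
  "left_quasigroup X op \<longleftrightarrow> (\<forall>x\<in>X. \<forall>y\<in>X. op x y \<in> X) \<and> (\<forall>x\<in>X. bij_betw (op x) X X)"

definition rack :: "'a set \<Rightarrow> ('a \<Rightarrow> 'a \<Rightarrow> 'a) \<Rightarrow> bool" where
  "rack X op \<longleftrightarrow> left_quasigroup X op \<and>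
     (\<forall>x\<in>X. \<forall>y\<in>X. \<forall>z\<in>X. op x (op y z) = op (op x y) (op x z))"

definition quandle :: "'a set \<Rightarrow> ('a \<Rightarrow> 'a \<Rightarrow> 'a) \<Rightarrow> bool" where
  "quandle X op \<longleftrightarrow> rack X op \<and> (\<forall>x\<in>X. op x x = x)"

definition LMlt :: "'a set \<Rightarrow> ('a \<Rightarrow> 'a \<Rightarrow> 'a) \<Rightarrow> ('a \<Rightarrow> 'a) set" where
  "LMlt X op = generate (BijGroup X) (ltrans X op ` X)"

text \<open>The construction R(G,Lambda): L_y = (lam x)^{g_y} where x is the representative
of the orbit of y and g_y \<in> G any element with g_y(x) = y. Well-definedness means
independence of the choice of g_y; the operation below uses a (Hilbert-)chosen g_y.\<close>
definition R_welldef :: "'a set \<Rightarrow> ('a \<Rightarrow> 'a) set \<Rightarrow> 'a set \<Rightarrow> ('a \<Rightarrow> ('a \<Rightarrow> 'a)) \<Rightarrow> bool" where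
  "R_welldef X G T lam \<longleftrightarrow>
     (\<forall>x\<in>T. \<forall>g\<in>G. \<forall>h\<in>G. g x = h x \<longrightarrow> pconj X (lam x) g = pconj X (lam x) h)"

definition R_rep :: "('a \<Rightarrow> 'a) set \<Rightarrow> 'a set \<Rightarrow> 'a \<Rightarrow> 'a" where
  "R_rep G T y = (THE x. x \<in> T \<and> y \<in> orbit G x)"

definition R_op :: "'a set \<Rightarrow> ('a \<Rightarrow> 'a) set \<Rightarrow> 'a set \<Rightarrow> ('a \<Rightarrow> ('a \<Rightarrow> 'a)) \<Rightarrow> 'a \<Rightarrow> 'a \<Rightarrow> 'a" where
  "R_op X G T lam y z =
     (let x = R_rep G T y; g = (SOME g. g \<in> G \<and> g x = y) in pconj X (lam x) g z)"

end

theory Submission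
  imports Defs
begin

text \<open>Once R(G,Lambda) is well defined, every left translation L_y lies in G and the
construction is G-equivariant: L_{g y} = (L_y)^g for g in G. Taking g = L_x turns
equivariance into the self-distributive law, so R(G,Lambda) is a rack, generated by the
conjugates of the lam_x. Well-definedness says that lam_x^g depends only on the coset
g G_x, which is exactly the statement that lam_x centralizes the stabilizer G_x. Finally
L_y y = y transports along the orbit of the representative x to lam_x x = x, i.e. to
lam_x in G_x; together with the centralizer condition this places lam_x in Z(G_x).\<close>

lemma carrier_BijGroup: "carrier (BijGroup X) = Bij X"
  by (simp add: BijGroup_def)

lemma Bij_mem: "f \<in> Bij X \<Longrightarrow> y \<in> X \<Longrightarrow> f y \<in> X"
  using Bij_imp_funcset by fast

lemma BijGroup_mult_apply:
  "f \<in> Bij X \<Longrightarrow> g \<in> Bij X \<Longrightarrow> y \<in> X \<Longrightarrow> (f \<otimes>\<^bsub>BijGroup X\<^esub> g) y = f (g y)"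
  by (simp add: BijGroup_def compose_def)

lemma BijGroup_one_apply: "y \<in> X \<Longrightarrow> \<one>\<^bsub>BijGroup X\<^esub> y = y"
  by (simp add: BijGroup_def)

lemma BijGroup_inv_apply:
  "f \<in> Bij X \<Longrightarrow> y \<in> X \<Longrightarrow> (inv\<^bsub>BijGroup X\<^esub> f) (f y) = y"
  by (simp add: inv_BijGroup Bij_mem Bij_def bij_betw_def)

lemma pconj_closed:
  "subgroup G (BijGroup X) \<Longrightarrow> f \<in> G \<Longrightarrow> g \<in> G \<Longrightarrow> pconj X f g \<in> G"
  by (simp add: pconj_def subgroup.m_closed subgroup.m_inv_closed)

lemma pconj_one:
  assumes "f \<in> Bij X"
  shows "pconj X f \<one>\<^bsub>BijGroup X\<^esub> = f"
proof -
  interpret group "BijGroup X" by (rule group_BijGroup)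
  show ?thesis
    using assms unfolding carrier_BijGroup[symmetric] by (simp add: pconj_def)
qed

lemma pconj_mult:
  assumes "f \<in> Bij X" "g \<in> Bij X" "h \<in> Bij X"
  shows "pconj X f (h \<otimes>\<^bsub>BijGroup X\<^esub> g) = pconj X (pconj X f g) h"
proof -
  interpret group "BijGroup X" by (rule group_BijGroup)
  show ?thesis
    using assms unfolding carrier_BijGroup[symmetric] by (simp add: pconj_def m_assoc inv_mult_group)
qed

lemma pconj_eq_self_iff_commute:
  assumes "f \<in> Bij X" "k \<in> Bij X"
  shows "pconj X f k = f \<longleftrightarrow> k \<otimes>\<^bsub>BijGroup X\<^esub> f = f \<otimes>\<^bsub>BijGroup X\<^esub> k"
proof -
  interpret group "BijGroup X" by (rule group_BijGroup)
  show ?thesis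
    using assms unfolding carrier_BijGroup[symmetric] by (simp add: pconj_def inv_solve_right')
qed

lemma pconj_apply:
  assumes "f \<in> Bij X" "g \<in> Bij X" "y \<in> X"
  shows "pconj X f g (g y) = g (f y)"
proof -
  interpret group "BijGroup X" by (rule group_BijGroup)
  have "inv\<^bsub>BijGroup X\<^esub> g \<in> Bij X"
    using assms(2) carrier_BijGroup inv_closed by metis
  then show ?thesis
    using assms m_closed
    by (simp add: pconj_def carrier_BijGroup BijGroup_mult_apply Bij_mem BijGroup_inv_apply)
qed

lemma pconj_eq_if_stab_fixes:
  assumes G: "subgroup G (BijGroup X)" and x: "x \<in> X" and l: "l \<in> Bij X"
    and fixed: "\<And>k. k \<in> stab G x \<Longrightarrow> pconj X l k = l"
    and g: "g \<in> G" and h: "h \<in> G" and gh: "g x = h x"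
  shows "pconj X l g = pconj X l h"
proof -
  interpret group "BijGroup X" by (rule group_BijGroup)
  have G_Bij: "G \<subseteq> Bij X"
    using subgroup.subset[OF G] by (simp add: carrier_BijGroup)
  define k where "k = inv\<^bsub>BijGroup X\<^esub> h \<otimes>\<^bsub>BijGroup X\<^esub> g"
  have h_inv: "inv\<^bsub>BijGroup X\<^esub> h \<in> G"
    using G h by (rule subgroup.m_inv_closed)
  then have k: "k \<in> G"
    unfolding k_def using G g by (simp add: subgroup.m_closed)
  have "k x = (inv\<^bsub>BijGroup X\<^esub> h) (h x)"
    using G_Bij g h_inv x by (simp add: k_def gh BijGroup_mult_apply subset_iff)
  also have "\<dots> = x"
    using G_Bij h x by (simp add: BijGroup_inv_apply subset_iff)
  finally have "k x = x" .
  with k have "pconj X l k = l"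
    by (simp add: fixed stab_def)
  moreover have "g = h \<otimes>\<^bsub>BijGroup X\<^esub> k"
    using inv_solve_left[of k h g] G_Bij g h k by (auto simp: k_def carrier_BijGroup)
  ultimately show ?thesis
    using pconj_mult[OF l, of k h] G_Bij h k by auto
qed

lemma pconj_invariant_iff_centralizer_stab:
  assumes G: "subgroup G (BijGroup X)" and x: "x \<in> X" and l: "l \<in> G"
  shows "(\<forall>g\<in>G. \<forall>h\<in>G. g x = h x \<longrightarrow> pconj X l g = pconj X l h)
    \<longleftrightarrow> l \<in> centralizer X G (stab G x)"
proof -
  have Bij: "g \<in> Bij X" if "g \<in> G" for g
    using subgroup.subset[OF G] that carrier_BijGroup by blast
  have fixed_iff_commute:
    "pconj X l k = l \<longleftrightarrow> l \<otimes>\<^bsub>BijGroup X\<^esub> k = k \<otimes>\<^bsub>BijGroup X\<^esub> l" if "k \<in> G" for k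
    using pconj_eq_self_iff_commute[OF Bij[OF l] Bij[OF that]] by auto
  have one: "\<one>\<^bsub>BijGroup X\<^esub> \<in> G" "\<one>\<^bsub>BijGroup X\<^esub> x = x"
    using subgroup.one_closed[OF G] x by (auto simp: BijGroup_one_apply)
  show ?thesis
  proof
    assume invariant: "\<forall>g\<in>G. \<forall>h\<in>G. g x = h x \<longrightarrow> pconj X l g = pconj X l h"
    have "pconj X l k = l" if "k \<in> stab G x" for k
    proof -
      from that one have "k \<in> G" "k x = \<one>\<^bsub>BijGroup X\<^esub> x"
        by (auto simp: stab_def)
      then have "pconj X l k = pconj X l \<one>\<^bsub>BijGroup X\<^esub>"
        using invariant one by blast
      then show ?thesis
        using pconj_one[OF Bij[OF l]] by simp
    qed
    then show "l \<in> centralizer X G (stab G x)"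
      using l fixed_iff_commute by (auto simp: centralizer_def stab_def)
  next
    assume "l \<in> centralizer X G (stab G x)"
    then have "pconj X l k = l" if "k \<in> stab G x" for k
      using that fixed_iff_commute by (auto simp: centralizer_def stab_def)
    then show "\<forall>g\<in>G. \<forall>h\<in>G. g x = h x \<longrightarrow> pconj X l g = pconj X l h"
      using pconj_eq_if_stab_fixes[OF G x Bij[OF l]] by blast
  qed
qed

lemma R_welldef_iff_rack_folder:
  assumes "subgroup G (BijGroup X)" "T \<subseteq> X" "\<forall>x\<in>T. lam x \<in> G"
  shows "R_welldef X G T lam \<longleftrightarrow> rack_folder X G T lam"
  unfolding R_welldef_def rack_folder_def
  using pconj_invariant_iff_centralizer_stab[OF assms(1)] assms(2,3) by (simp add: subset_iff)

lemma center_stab_iff: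
  "l \<in> G \<Longrightarrow> l \<in> center X (stab G x) \<longleftrightarrow> l \<in> centralizer X G (stab G x) \<and> l x = x"
  by (auto simp: center_def centralizer_def stab_def)

lemma quandle_folder_iff:
  "\<forall>x\<in>T. lam x \<in> G \<Longrightarrow>
    quandle_folder X G T lam \<longleftrightarrow> rack_folder X G T lam \<and> (\<forall>x\<in>T. lam x x = x)"
  unfolding quandle_folder_def rack_folder_def by (auto simp: center_stab_iff)

lemma rack_if_ltrans_conj:
  assumes Bij: "\<And>x. x \<in> X \<Longrightarrow> op x \<in> Bij X"
    and conj: "\<And>x y. x \<in> X \<Longrightarrow> y \<in> X \<Longrightarrow> op (op x y) = pconj X (op y) (op x)"
  shows "rack X op"
  unfolding rack_def left_quasigroup_def
proof (intro conjI ballI)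
  fix x y assume "x \<in> X" "y \<in> X"
  then show "op x y \<in> X" by (simp add: Bij Bij_mem)
next
  fix x assume "x \<in> X"
  then show "bij_betw (op x) X X" using Bij by (simp add: Bij_def)
next
  fix x y z assume x: "x \<in> X" and y: "y \<in> X" and z: "z \<in> X"
  have "op (op x y) (op x z) = pconj X (op y) (op x) (op x z)"
    by (simp only: conj[OF x y])
  also have "\<dots> = op x (op y z)"
    by (rule pconj_apply[OF Bij[OF y] Bij[OF x] z])
  finally show "op x (op y z) = op (op x y) (op x z)" by (rule sym)
qed

lemma orbit_reps_cover:
  "orbit_reps X G T \<Longrightarrow> y \<in> X \<Longrightarrow> \<exists>x\<in>T. \<exists>g\<in>G. y = g x"
  unfolding orbit_reps_def orbit_def by blast

lemma R_rep_orbit: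
  assumes G: "subgroup G (BijGroup X)" and T: "orbit_reps X G T"
    and x: "x \<in> T" and g: "g \<in> G"
  shows "R_rep G T (g x) = x"
  unfolding R_rep_def
proof (rule the1_equality)
  have "x \<in> X" "g \<in> Bij X"
    using T x subgroup.subset[OF G] g by (auto simp: orbit_reps_def carrier_BijGroup)
  then have "g x \<in> X"
    by (rule Bij_mem[rotated])
  then show "\<exists>!x'. x' \<in> T \<and> g x \<in> orbit G x'"
    using T by (simp add: orbit_reps_def)
  show "x \<in> T \<and> g x \<in> orbit G x"
    using x g by (auto simp: orbit_def)
qed

lemma R_op_orbit:
  assumes G: "subgroup G (BijGroup X)" and T: "orbit_reps X G T"
    and W: "R_welldef X G T lam" and x: "x \<in> T" and g: "g \<in> G"
  shows "R_op X G T lam (g x) = pconj X (lam x) g"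
proof -
  define g' where "g' = (SOME g'. g' \<in> G \<and> g' x = g x)"
  have "g' \<in> G \<and> g' x = g x"
    unfolding g'_def by (rule someI[of _ g]) (use g in blast)
  then have "pconj X (lam x) g' = pconj X (lam x) g"
    using W x g unfolding R_welldef_def by blast
  then show ?thesis
    by (simp add: fun_eq_iff R_op_def R_rep_orbit[OF G T x g] g'_def)
qed

locale R_welldefined =
  fixes X :: "'a set" and G :: "('a \<Rightarrow> 'a) set" and T :: "'a set"
    and lam :: "'a \<Rightarrow> ('a \<Rightarrow> 'a)"
  assumes subgroup: "subgroup G (BijGroup X)"
    and orbit_reps: "orbit_reps X G T"
    and lam_in_G: "\<forall>x\<in>T. lam x \<in> G"
    and welldef: "R_welldef X G T lam"
begin

abbreviation op where "op \<equiv> R_op X G T lam"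

lemmas op_orbit = R_op_orbit[OF subgroup orbit_reps welldef]

lemma G_Bij: "g \<in> G \<Longrightarrow> g \<in> Bij X"
  using subgroup.subset[OF subgroup] carrier_BijGroup by blast

lemma reps_subset: "T \<subseteq> X"
  using orbit_reps by (simp add: orbit_reps_def)

lemma R_op_rep:
  assumes x: "x \<in> T"
  shows "op x = lam x"
proof -
  have "x \<in> X" using x reps_subset by blast
  then have "op x = pconj X (lam x) \<one>\<^bsub>BijGroup X\<^esub>"
    using op_orbit[OF x subgroup.one_closed[OF subgroup]]
    by (simp add: BijGroup_one_apply)
  then show ?thesis
    using x lam_in_G by (simp add: pconj_one G_Bij)
qed

lemma R_op_in_G:
  assumes "y \<in> X"
  shows "op y \<in> G"
proof -
  obtain x g where "x \<in> T" "g \<in> G" "y = g x"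
    using orbit_reps_cover[OF orbit_reps assms] by blast
  then show ?thesis
    using lam_in_G by (simp add: op_orbit pconj_closed[OF subgroup])
qed

lemma R_op_equivariant:
  assumes h: "h \<in> G" and y: "y \<in> X"
  shows "op (h y) = pconj X (op y) h"
proof -
  obtain x g where x: "x \<in> T" and g: "g \<in> G" and y_eq: "y = g x"
    using orbit_reps_cover[OF orbit_reps y] by blast
  have "h y = (h \<otimes>\<^bsub>BijGroup X\<^esub> g) x"
    using reps_subset x by (simp add: y_eq BijGroup_mult_apply G_Bij h g subset_iff)
  moreover have "h \<otimes>\<^bsub>BijGroup X\<^esub> g \<in> G"
    using subgroup h g by (rule subgroup.m_closed)
  ultimately have "op (h y) = pconj X (lam x) (h \<otimes>\<^bsub>BijGroup X\<^esub> g)"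
    using op_orbit[OF x] by simp
  also have "\<dots> = pconj X (op y) h"
    using lam_in_G x by (simp add: pconj_mult G_Bij g h y_eq op_orbit)
  finally show ?thesis .
qed

lemma rack_R_op: "rack X op"
  by (rule rack_if_ltrans_conj) (simp_all add: G_Bij R_op_in_G R_op_equivariant)

lemma ltrans_R_op: "y \<in> X \<Longrightarrow> ltrans X op y = op y"
  unfolding ltrans_def by (simp add: extensional_restrict Bij_imp_extensional G_Bij R_op_in_G)

lemma ltrans_R_op_image: "ltrans X op ` X = (\<Union>x\<in>T. conj_class X (lam x) G)"
proof -
  have "ltrans X op ` X = op ` X"
    by (simp add: ltrans_R_op)
  also have "op ` X = {pconj X (lam x) g | x g. x \<in> T \<and> g \<in> G}"
  proof (intro equalityI subsetI)
    fix f assume "f \<in> op ` X"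
    then obtain x g where "x \<in> T" "g \<in> G" "f = op (g x)"
      using orbit_reps_cover[OF orbit_reps] by blast
    then show "f \<in> {pconj X (lam x) g | x g. x \<in> T \<and> g \<in> G}"
      using op_orbit by blast
  next
    fix f assume "f \<in> {pconj X (lam x) g | x g. x \<in> T \<and> g \<in> G}"
    then obtain x g where x: "x \<in> T" and g: "g \<in> G" and "f = pconj X (lam x) g"
      by blast
    then have f: "f = op (g x)"
      by (simp add: op_orbit)
    have "g x \<in> X"
      using x g reps_subset by (blast intro: Bij_mem G_Bij)
    then show "f \<in> op ` X" using f by blast
  qed
  finally show ?thesis
    by (auto simp: conj_class_def)
qed

lemma ltrans_R_op_rep: "x \<in> T \<Longrightarrow> ltrans X op x = lam x"
  using reps_subset by (auto simp: ltrans_R_op R_op_rep)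

lemma LMlt_R_op: "LMlt X op = generate (BijGroup X) (\<Union>x\<in>T. conj_class X (lam x) G)"
  by (simp add: LMlt_def ltrans_R_op_image)

lemma LMlt_R_op_subset: "LMlt X op \<subseteq> G"
proof -
  have "ltrans X op ` X \<subseteq> G"
    using R_op_in_G ltrans_R_op by auto
  then show ?thesis
    unfolding LMlt_def by (rule group.generate_subgroup_incl[OF group_BijGroup _ subgroup])
qed

lemma quandle_R_op_iff: "quandle X op \<longleftrightarrow> (\<forall>x\<in>T. lam x x = x)"
proof
  assume "quandle X op"
  then show "\<forall>x\<in>T. lam x x = x"
    using reps_subset by (auto simp: quandle_def R_op_rep[symmetric])
next
  assume fixes_rep: "\<forall>x\<in>T. lam x x = x"
  have "op y y = y" if y: "y \<in> X" for y
  proof -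
    obtain x g where x: "x \<in> T" and g: "g \<in> G" and y_eq: "y = g x"
      using orbit_reps_cover[OF orbit_reps y] by blast
    have "op y y = pconj X (lam x) g (g x)"
      by (simp add: y_eq op_orbit[OF x g])
    also have "\<dots> = g (lam x x)"
      using x g lam_in_G reps_subset by (simp add: pconj_apply G_Bij subset_iff)
    finally show ?thesis
      using fixes_rep x y_eq by simp
  qed
  then show "quandle X op"
    by (simp add: quandle_def rack_R_op)
qed

end

theorem proposition3p3:
  fixes X :: "'a set" and G :: "('a \<Rightarrow> 'a) set" and T :: "'a set"
    and lam :: "'a \<Rightarrow> ('a \<Rightarrow> 'a)"
  assumes "X \<noteq> {}"
    and "subgroup G (BijGroup X)"
    and "orbit_reps X G T"
    and "\<forall>x\<in>T. lam x \<in> G"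
  shows "(R_welldef X G T lam \<longleftrightarrow> rack_folder X G T lam)
     \<and> (rack_folder X G T lam \<longrightarrow>
          rack X (R_op X G T lam)
          \<and> (\<forall>x\<in>T. ltrans X (R_op X G T lam) x = lam x)
          \<and> LMlt X (R_op X G T lam) = generate (BijGroup X) (\<Union>x\<in>T. conj_class X (lam x) G)
          \<and> LMlt X (R_op X G T lam) \<subseteq> G)
     \<and> ((R_welldef X G T lam \<and> quandle X (R_op X G T lam)) \<longleftrightarrow> quandle_folder X G T lam)"
proof -
  have "T \<subseteq> X"
    using assms(3) by (simp add: orbit_reps_def)
  with assms(2,4) have welldef_iff: "R_welldef X G T lam \<longleftrightarrow> rack_folder X G T lam"
    by (intro R_welldef_iff_rack_folder)
  have R: "R_welldef X G T lam \<Longrightarrow> R_welldefined X G T lam"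
    using assms(2-4) by (rule R_welldefined.intro)
  have "rack X (R_op X G T lam)
          \<and> (\<forall>x\<in>T. ltrans X (R_op X G T lam) x = lam x)
          \<and> LMlt X (R_op X G T lam) = generate (BijGroup X) (\<Union>x\<in>T. conj_class X (lam x) G)
          \<and> LMlt X (R_op X G T lam) \<subseteq> G" if "rack_folder X G T lam"
  proof -
    interpret R_welldefined X G T lam
      using R that welldef_iff by blast
    show ?thesis
      using rack_R_op ltrans_R_op_rep LMlt_R_op LMlt_R_op_subset by blast
  qed
  moreover have "(R_welldef X G T lam \<and> quandle X (R_op X G T lam)) \<longleftrightarrow> quandle_folder X G T lam"
    using R_welldefined.quandle_R_op_iff[OF R] welldef_iff quandle_folder_iff[OF assms(4)]
    by blast
  ultimately show ?thesis
    using welldef_iff by blast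
qed

end
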